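(* Let $P_1, \ldots, P_M$ be probability densities on a space $\mathcal{X}$, and let $\pi_1, \ldots, \pi_M \in [0,1]$ with $\sum_{i=1}^M \pi_i = 1$ be arbitrary weights. Then $$ JS(P_1, \ldots, P_M) \le JS_{GM}(P_1, \ldots, P_M), $$ where $JS(P_1,\ldots,P_M) = \sum_{i=1}^M \pi_i\, KL\big(P_i \,\Vert\, \overline{P}\big)$ with $\overline{P} = \sum_{i=1}^M \pi_i P_i$, and $JS_{GM}(P_1,\ldots,P_M) = \sum_{i=1}^M \sum_{j \neq i} \pi_i \pi_j\, KL(P_i \Vert P_j)$.
   Context: For densities $P, Q$ on $\mathcal{X}$, $KL(P\Vert Q) = \int_{\mathcal{X}} P(x)\ln\frac{P(x)}{Q(x)}\,dx$ (the Kullback–Leibler divergence). The quantity $JS_{GM}$ equals $\sum_{i=1}^M \pi_i \int_{\mathcal{X}} P_i(x)\ln\frac{P_i(x)}{\overline{P}'(x)}\,dx$ where $\overline{P}' = \prod_{j=1}^M P_j^{\pi_j}$ is the weighted geometric mean (not necessarily a probability density); it is called the Jensen–Shannon divergence with geometric mean. *)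

theory Defs
  imports "HOL-Analysis.Analysis"
begin

definition is_density :: "'a measure \<Rightarrow> ('a \<Rightarrow> real) \<Rightarrow> bool" where
  "is_density M f \<longleftrightarrow> f \<in> borel_measurable M \<and> (\<forall>x\<in>space M. 0 \<le> f x)
     \<and> (\<integral>\<^sup>+ x. ennreal (f x) \<partial>M) = 1"

definition ext_integral :: "'a measure \<Rightarrow> ('a \<Rightarrow> ereal) \<Rightarrow> ereal" where
  "ext_integral M f =
     enn2ereal (\<integral>\<^sup>+ x. e2ennreal (f x) \<partial>M) - enn2ereal (\<integral>\<^sup>+ x. e2ennreal (- f x) \<partial>M)"

definition KL_div :: "'a measure \<Rightarrow> ('a \<Rightarrow> real) \<Rightarrow> ('a \<Rightarrow> real) \<Rightarrow> ereal" where
  "KL_div M P Q = ext_integral M (\<lambda>x.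
     if P x = 0 then 0 else if Q x = 0 then \<infinity> else ereal (P x * ln (P x / Q x)))"

end

theory Submission
  imports Defs
begin

(* Because densities integrate to one, KL(P || Q) is also the integral of p ln(p/q) - p + q,
   an integrand that is nonnegative and convex in q. Jensen's inequality in the second argument,
   applied pointwise, gives KL(P_i || sum_j w_j P_j) <= sum_j w_j KL(P_i || P_j), where the term
   j = i vanishes; weighting by w_i and summing yields the claim. *)

definition kl_term :: "real \<Rightarrow> real \<Rightarrow> ereal" where
  "kl_term p q = (if p = 0 then 0 else if q = 0 then \<infinity> else ereal (p * ln (p / q)))"

definition kl_excess :: "real \<Rightarrow> real \<Rightarrow> ennreal" where
  "kl_excess p q = (if p = 0 then ennreal q else if q = 0 then \<infinity> else ennreal (p * ln (p / q) - p + q))"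

lemma borel_measurable_kl_term_kl_excess [measurable]:
  assumes "P \<in> borel_measurable M" "Q \<in> borel_measurable M"
  shows "(\<lambda>x. e2ennreal (kl_term (P x) (Q x))) \<in> borel_measurable M"
    and "(\<lambda>x. e2ennreal (- kl_term (P x) (Q x))) \<in> borel_measurable M"
    and "(\<lambda>x. kl_excess (P x) (Q x)) \<in> borel_measurable M"
  using assms unfolding kl_term_def kl_excess_def by measurable

lemma diff_le_mult_ln_div:
  fixes p q :: real
  assumes "0 < p" "0 < q"
  shows "p - q \<le> p * ln (p / q)"
proof -
  have "p * ln (q / p) \<le> p * (q / p - 1)"
    using assms by (intro mult_left_mono ln_le_minus_one) auto
  also have "\<dots> = q - p" using assms by (simp add: field_simps)
  finally show ?thesis using assms by (simp add: ln_div right_diff_distrib)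
qed

lemma e2ennreal_neg_kl_term_le:
  assumes "0 \<le> p" "0 \<le> q"
  shows "e2ennreal (- kl_term p q) \<le> ennreal q"
proof (cases "p > 0 \<and> q > 0")
  case True
  then show ?thesis
    using diff_le_mult_ln_div[of p q] by (simp add: kl_term_def ennreal_leI)
qed (use assms in \<open>auto simp: kl_term_def e2ennreal_neg\<close>)

lemma kl_term_plus_eq:
  assumes "0 \<le> p" "0 \<le> q"
  shows "e2ennreal (kl_term p q) + ennreal q = kl_excess p q + e2ennreal (- kl_term p q) + ennreal p"
proof (cases "p > 0 \<and> q > 0")
  case True
  define t where "t = p * ln (p / q)"
  have "0 \<le> t - p + q" using diff_le_mult_ln_div[of p q] True by (simp add: t_def)
  then show ?thesis using True
    by (cases "t \<ge> 0")
      (simp_all add: kl_term_def kl_excess_def t_def[symmetric] ennreal_neg flip: ennreal_plus)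
qed (use assms in \<open>auto simp: kl_term_def kl_excess_def\<close>)

lemma KL_div_eq_nn_integral_kl_excess:
  assumes P: "is_density M P" and Q: "is_density M Q"
  shows "KL_div M P Q = enn2ereal (\<integral>\<^sup>+ x. kl_excess (P x) (Q x) \<partial>M)"
proof -
  have [measurable]: "P \<in> borel_measurable M" "Q \<in> borel_measurable M"
    and nonneg: "\<And>x. x \<in> space M \<Longrightarrow> 0 \<le> P x \<and> 0 \<le> Q x"
    and P1: "(\<integral>\<^sup>+ x. ennreal (P x) \<partial>M) = 1" and Q1: "(\<integral>\<^sup>+ x. ennreal (Q x) \<partial>M) = 1"
    using P Q by (auto simp: is_density_def)
  define A where "A = (\<integral>\<^sup>+ x. e2ennreal (kl_term (P x) (Q x)) \<partial>M)"
  define B where "B = (\<integral>\<^sup>+ x. e2ennreal (- kl_term (P x) (Q x)) \<partial>M)"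
  define C where "C = (\<integral>\<^sup>+ x. kl_excess (P x) (Q x) \<partial>M)"
  have "A + 1 = (\<integral>\<^sup>+ x. e2ennreal (kl_term (P x) (Q x)) + ennreal (Q x) \<partial>M)"
    unfolding A_def Q1[symmetric] by (rule nn_integral_add[symmetric]) auto
  also have "\<dots> = (\<integral>\<^sup>+ x. kl_excess (P x) (Q x) + e2ennreal (- kl_term (P x) (Q x)) + ennreal (P x) \<partial>M)"
    by (rule nn_integral_cong) (use kl_term_plus_eq nonneg in auto)
  also have "\<dots> = C + B + 1"
    unfolding C_def B_def P1[symmetric] by (simp add: nn_integral_add)
  finally have AB: "A = C + B"
    using ennreal_add_left_cancel[of 1 A "C + B"] by (simp add: add.commute)
  \<comment> \<open>the negative part is finite, so the difference in \<open>ext_integral\<close> cancels\<close>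
  have "B \<le> 1"
    unfolding B_def Q1[symmetric] by (rule nn_integral_mono) (use e2ennreal_neg_kl_term_le nonneg in auto)
  then obtain b where b: "enn2ereal B = ereal b"
    by (cases "enn2ereal B") (auto simp: enn2ereal_nonneg[of B] top_unique dest: order_trans)
  have "KL_div M P Q = enn2ereal A - enn2ereal B"
    unfolding KL_div_def ext_integral_def A_def B_def kl_term_def by simp
  then show ?thesis
    unfolding C_def[symmetric] AB plus_ennreal.rep_eq b by (cases "enn2ereal C") auto
qed

lemma convex_on_kl_excess:
  fixes p :: real
  assumes "0 \<le> p"
  shows "convex_on {0<..} (\<lambda>q. p * ln (p / q) - p + q)"
proof (rule convex_on_realI)
  show "((\<lambda>q. p * ln (p / q) - p + q) has_real_derivative 1 - p / q) (at q)" if "q \<in> {0<..}" for q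
  proof (cases "p = 0")
    case False
    then show ?thesis using that assms
      by (auto intro!: derivative_eq_intros simp: field_simps power2_eq_square)
  qed (auto intro!: derivative_eq_intros)
qed (use assms in \<open>auto intro!: divide_left_mono\<close>)

lemma kl_excess_mixture_le:
  assumes I: "finite I" and w0: "\<And>j. j \<in> I \<Longrightarrow> 0 \<le> w j" and w1: "(\<Sum>j\<in>I. w j) = 1"
    and p: "0 \<le> p" and q0: "\<And>j. j \<in> I \<Longrightarrow> 0 \<le> q j"
  shows "kl_excess p (\<Sum>j\<in>I. w j * q j) \<le> (\<Sum>j\<in>I. ennreal (w j) * kl_excess p (q j))"
proof -
  consider "p = 0" | "p > 0" "\<exists>j\<in>I. w j > 0 \<and> q j = 0" | "p > 0" "\<forall>j\<in>I. w j > 0 \<longrightarrow> q j > 0"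
    using p q0 by force
  then show ?thesis
  proof cases
    case 1
    then show ?thesis
      using w0 q0 by (simp add: kl_excess_def ennreal_mult flip: sum_ennreal)
  next
    case 2
    then obtain j where "j \<in> I" "w j > 0" "q j = 0" by blast
    then have "ennreal (w j) * kl_excess p (q j) = \<infinity>"
      using \<open>p > 0\<close> by (simp add: kl_excess_def)
    moreover have "ennreal (w j) * kl_excess p (q j) \<le> (\<Sum>j\<in>I. ennreal (w j) * kl_excess p (q j))"
      using \<open>j \<in> I\<close> I by (intro member_le_sum) auto
    ultimately show ?thesis by (simp add: top_unique)
  next
    case 3
    define f where "f q = p * ln (p / q) - p + q" for q
    define S where "S = {j\<in>I. w j > 0}"
    have S: "S \<subseteq> I" "finite S" using I by (auto simp: S_def)
    have q_pos: "\<And>j. j \<in> S \<Longrightarrow> q j > 0" using 3 by (auto simp: S_def)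
    have f_nonneg: "\<And>j. j \<in> S \<Longrightarrow> 0 \<le> f (q j)"
      using diff_le_mult_ln_div[of p "q _"] 3 q_pos by (force simp: f_def)
    have drop_zero_weights: "sum g I = sum g S" if "\<And>j. j \<in> I \<Longrightarrow> w j = 0 \<Longrightarrow> g j = 0"
      for g :: "_ \<Rightarrow> 'b::comm_monoid_add"
      using that w0 by (intro sum.mono_neutral_right[OF I S(1)]) (force simp: S_def)
    have wS: "(\<Sum>j\<in>S. w j) = 1" using w1 drop_zero_weights[of w] by simp
    then have "S \<noteq> {}" by auto
    have mixture: "(\<Sum>j\<in>I. w j * q j) = (\<Sum>j\<in>S. w j * q j)" by (rule drop_zero_weights) simp
    have "0 < (\<Sum>j\<in>S. w j * q j)"
      using \<open>S \<noteq> {}\<close> S q_pos by (intro sum_pos) (auto simp: S_def)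
    then have "kl_excess p (\<Sum>j\<in>I. w j * q j) = ennreal (f (\<Sum>j\<in>S. w j * q j))"
      using 3 by (simp add: mixture kl_excess_def f_def)
    also have "\<dots> \<le> ennreal (\<Sum>j\<in>S. w j * f (q j))"
      using convex_on_sum[OF S(2) \<open>S \<noteq> {}\<close> convex_on_kl_excess[OF p] wS] w0 S q_pos
      by (intro ennreal_leI) (auto simp: f_def)
    also have "\<dots> = (\<Sum>j\<in>S. ennreal (w j * f (q j)))"
      using w0 S f_nonneg by (intro sum_ennreal[symmetric]) (auto intro: mult_nonneg_nonneg)
    also have "\<dots> = (\<Sum>j\<in>S. ennreal (w j) * kl_excess p (q j))"
    proof (rule sum.cong)
      fix j assume "j \<in> S"
      with 3 w0 S q_pos[OF this] f_nonneg[OF this]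
      show "ennreal (w j * f (q j)) = ennreal (w j) * kl_excess p (q j)"
        by (auto simp: f_def kl_excess_def ennreal_mult)
    qed simp
    also have "\<dots> = (\<Sum>j\<in>I. ennreal (w j) * kl_excess p (q j))"
      by (rule drop_zero_weights[symmetric]) simp
    finally show ?thesis .
  qed
qed

lemma kl_excess_self [simp]: "kl_excess p p = 0"
  by (simp add: kl_excess_def)

lemma is_density_mixture:
  assumes dens: "\<And>j. j \<in> I \<Longrightarrow> is_density M (P j)"
    and w0: "\<And>j. j \<in> I \<Longrightarrow> 0 \<le> w j" and w1: "(\<Sum>j\<in>I. w j) = 1"
  shows "is_density M (\<lambda>x. \<Sum>j\<in>I. w j * P j x)"
proof -
  have [measurable]: "\<And>j. j \<in> I \<Longrightarrow> P j \<in> borel_measurable M"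
    and P0: "\<And>j x. j \<in> I \<Longrightarrow> x \<in> space M \<Longrightarrow> 0 \<le> P j x"
    and P1: "\<And>j. j \<in> I \<Longrightarrow> (\<integral>\<^sup>+ x. ennreal (P j x) \<partial>M) = 1"
    using dens by (auto simp: is_density_def)
  have "(\<integral>\<^sup>+ x. ennreal (\<Sum>j\<in>I. w j * P j x) \<partial>M) = (\<integral>\<^sup>+ x. (\<Sum>j\<in>I. ennreal (w j) * ennreal (P j x)) \<partial>M)"
    using w0 P0 by (intro nn_integral_cong) (auto simp: ennreal_mult simp flip: sum_ennreal)
  also have "\<dots> = (\<Sum>j\<in>I. ennreal (w j) * (\<integral>\<^sup>+ x. ennreal (P j x) \<partial>M))"
    by (subst nn_integral_sum) (auto simp: nn_integral_cmult)
  also have "\<dots> = ennreal (\<Sum>j\<in>I. w j)"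
    using P1 w0 by (simp add: sum_ennreal)
  finally show ?thesis
    using w0 P0 w1 by (auto simp: is_density_def intro!: sum_nonneg)
qed

lemma nn_integral_kl_excess_mixture_le:
  assumes I: "finite I" "i \<in> I" and dens: "\<And>j. j \<in> I \<Longrightarrow> is_density M (P j)"
    and w0: "\<And>j. j \<in> I \<Longrightarrow> 0 \<le> w j" and w1: "(\<Sum>j\<in>I. w j) = 1"
  shows "(\<integral>\<^sup>+ x. kl_excess (P i x) (\<Sum>j\<in>I. w j * P j x) \<partial>M)
    \<le> (\<Sum>j\<in>I-{i}. ennreal (w j) * (\<integral>\<^sup>+ x. kl_excess (P i x) (P j x) \<partial>M))"
proof -
  have [measurable]: "\<And>j. j \<in> I \<Longrightarrow> P j \<in> borel_measurable M"
    and P0: "\<And>j x. j \<in> I \<Longrightarrow> x \<in> space M \<Longrightarrow> 0 \<le> P j x"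
    using dens by (auto simp: is_density_def)
  have "(\<integral>\<^sup>+ x. kl_excess (P i x) (\<Sum>j\<in>I. w j * P j x) \<partial>M)
      \<le> (\<integral>\<^sup>+ x. (\<Sum>j\<in>I. ennreal (w j) * kl_excess (P i x) (P j x)) \<partial>M)"
    using I w0 w1 P0 by (intro nn_integral_mono kl_excess_mixture_le) auto
  also have "\<dots> = (\<integral>\<^sup>+ x. (\<Sum>j\<in>I-{i}. ennreal (w j) * kl_excess (P i x) (P j x)) \<partial>M)"
    using I by (simp add: sum.remove)
  also have "\<dots> = (\<Sum>j\<in>I-{i}. ennreal (w j) * (\<integral>\<^sup>+ x. kl_excess (P i x) (P j x) \<partial>M))"
    using I by (subst nn_integral_sum) (auto simp: nn_integral_cmult)
  finally show ?thesis .
qed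

lemma ereal_times_enn2ereal: "0 \<le> a \<Longrightarrow> ereal a * enn2ereal X = enn2ereal (ennreal a * X)"
  by (simp add: times_ennreal.rep_eq)

theorem proposition2:
  fixes M :: "'a measure" and P :: "nat \<Rightarrow> 'a \<Rightarrow> real" and w :: "nat \<Rightarrow> real" and m :: nat
  assumes dens: "\<And>i. i \<in> {1..m} \<Longrightarrow> is_density M (P i)"
    and w_range: "\<And>i. i \<in> {1..m} \<Longrightarrow> 0 \<le> w i \<and> w i \<le> 1"
    and w_sum: "(\<Sum>i\<in>{1..m}. w i) = 1"
  shows "(\<Sum>i\<in>{1..m}. ereal (w i) * KL_div M (P i) (\<lambda>x. \<Sum>j\<in>{1..m}. w j * P j x))
       \<le> (\<Sum>i\<in>{1..m}. \<Sum>j\<in>{1..m} - {i}. ereal (w i * w j) * KL_div M (P i) (P j))"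
proof -
  define I where "I = {1..m}"
  define Q where "Q = (\<lambda>x. \<Sum>j\<in>I. w j * P j x)"
  define K where "K i j = (\<integral>\<^sup>+ x. kl_excess (P i x) (P j x) \<partial>M)" for i j
  have w0: "\<And>j. j \<in> I \<Longrightarrow> 0 \<le> w j" using w_range by (simp add: I_def)
  have dens': "\<And>j. j \<in> I \<Longrightarrow> is_density M (P j)" using dens by (simp add: I_def)
  have "is_density M Q"
    unfolding Q_def using dens' w0 w_sum by (intro is_density_mixture) (auto simp: I_def)
  then have "(\<Sum>i\<in>I. ereal (w i) * KL_div M (P i) Q)
      = enn2ereal (\<Sum>i\<in>I. ennreal (w i) * (\<integral>\<^sup>+ x. kl_excess (P i x) (Q x) \<partial>M))"
    using w0 dens' by (simp add: KL_div_eq_nn_integral_kl_excess ereal_times_enn2ereal)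
  also have "\<dots> \<le> enn2ereal (\<Sum>i\<in>I. ennreal (w i) * (\<Sum>j\<in>I-{i}. ennreal (w j) * K i j))"
    unfolding less_eq_ennreal.rep_eq[symmetric] Q_def K_def
    using dens' w0 w_sum
    by (intro sum_mono mult_left_mono nn_integral_kl_excess_mixture_le) (auto simp: I_def)
  also have "\<dots> = (\<Sum>i\<in>I. \<Sum>j\<in>I-{i}. ereal (w i * w j) * KL_div M (P i) (P j))"
    using w0 dens'
    by (simp add: K_def KL_div_eq_nn_integral_kl_excess ereal_times_enn2ereal sum_distrib_left ennreal_mult mult.assoc)
  finally show ?thesis unfolding I_def Q_def .
qed

end
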